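(* Let $\varphi:S^1\to S^1$ be an orientation preserving circle homeomorphism with rational rotation number $\varrho=p/q$ ($p,q$ relatively prime, $q\ge1$) which is conjugate to the rotation $\mathcal{R}_{\varrho}$, i.e. $\varphi=h^{-1}\circ\mathcal{R}_{\varrho}\circ h$ for some orientation preserving circle homeomorphism $h$. Let $\Phi$ be a lift of $\varphi$, let $x_0\in\mathbb{R}$, and let $\Gamma=\Gamma(u)$ be the curlicue generated by $u_n=\Phi^n(x_0)$. Then $\Gamma$ is not superficial (for every choice of $x_0$), and the following conditions are equivalent: (1) $\frac{1}{q}\sum_{k=0}^{q-1}\exp(2\pi\imath\Phi^k(x_0))=0$; (2) $\Gamma$ is bounded; (3) $\Gamma$ is an equilateral $q$-polygon (i.e. $z_q=z_0$, so $\Gamma$ is the closed polygon $z_0z_1\cdots z_{q-1}z_0$ with $q$ sides of length $1$, traversed repeatedly). Moreover, $\Gamma$ is a regular polygon for every $x_0\in\mathbb{R}$ if and only if $\varphi=\mathcal{R}_{\varrho}$. In this case, if $x_0\in\mathbb{Z}$, the points $z_0,z_1,z_q,z_{q+1},z_{2q},z_{2q+1},\dots,z_{nq},z_{nq+1},\dots$ all lie on the line $\mathrm{Im}(z)=0$.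
   Context: Identify $S^1=\mathbb{R}/\mathbb{Z}$ via $x\mapsto\exp(2\pi\imath x)$; a lift of $\varphi$ is a homeomorphism $\Phi:\mathbb{R}\to\mathbb{R}$ with $\Phi(x+1)=\Phi(x)+1$ projecting to $\varphi$. $\mathcal{R}_{\varrho}$ is the rotation $x\mapsto x+\varrho \bmod 1$. For a real sequence $u=(u_n)_{n\ge0}$, the curlicue $\Gamma(u)$ is the piecewise linear curve in $\mathbb{C}$ passing consecutively through $z_0=0$ and $z_n=\sum_{k=0}^{n-1}\exp(2\pi\imath u_k)$, $n\ge1$. A regular polygon means an equilateral and equiangular closed polygon, possibly self-intersecting (a regular convex or star polygon). For $t>0$, $\Gamma_t$ is the initial part of $\Gamma$ of length $t$ and $\Gamma^{\varepsilon}=\{y:\exists x\in\Gamma,|x-y|<\varepsilon\}$. An unbounded curve is superficial if $\lim_{t\to\infty}t/\mathrm{Diam}\,\Gamma_t=\infty$; a bounded curve is superficial if $\lim_{\varepsilon\to0}\mathrm{Area}(\Gamma^{\varepsilon})/\varepsilon=\infty$ (Area = 2-dimensional Lebesgue measure). *)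

theory Defs
  imports "HOL-Analysis.Analysis"
begin

text \<open>The circle S^1 = R/Z is realised as the unit circle in C, via x maps to exp(2 pi i x) = cis (2 pi x).\<close>

abbreviation S1 :: "complex set" where "S1 \<equiv> sphere 0 1"

definition circle_homeo :: "(complex \<Rightarrow> complex) \<Rightarrow> bool" where
  "circle_homeo f \<longleftrightarrow> (\<exists>g. homeomorphism S1 S1 f g)"

definition is_lift :: "(real \<Rightarrow> real) \<Rightarrow> (complex \<Rightarrow> complex) \<Rightarrow> bool" where
  "is_lift F f \<longleftrightarrow> (\<exists>G. homeomorphism UNIV UNIV F G)
     \<and> (\<forall>x. F (x + 1) = F x + 1)
     \<and> (\<forall>x. f (cis (2 * pi * x)) = cis (2 * pi * F x))"

definition orient_pres :: "(complex \<Rightarrow> complex) \<Rightarrow> bool" where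
  "orient_pres f \<longleftrightarrow> (\<exists>F. is_lift F f \<and> strict_mono F)"

definition rot :: "real \<Rightarrow> complex \<Rightarrow> complex" where
  "rot \<rho> z = cis (2 * pi * \<rho>) * z"

definition lift_rot :: "(real \<Rightarrow> real) \<Rightarrow> real" where
  "lift_rot F = lim (\<lambda>n. (F ^^ n) 0 / real n)"

definition rotation_number :: "(real \<Rightarrow> real) \<Rightarrow> real" where
  "rotation_number F = frac (lift_rot F)"

definition zpt :: "(nat \<Rightarrow> real) \<Rightarrow> nat \<Rightarrow> complex" where
  "zpt u n = (\<Sum>k<n. cis (2 * pi * u k))"

definition curl_param :: "(nat \<Rightarrow> real) \<Rightarrow> real \<Rightarrow> complex" where
  "curl_param u s = zpt u (nat \<lfloor>s\<rfloor>)
      + complex_of_real (s - of_int \<lfloor>s\<rfloor>) * cis (2 * pi * u (nat \<lfloor>s\<rfloor>))"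

definition curlicue :: "(nat \<Rightarrow> real) \<Rightarrow> complex set" where
  "curlicue u = curl_param u ` {0..}"

definition curl_init :: "(nat \<Rightarrow> real) \<Rightarrow> real \<Rightarrow> complex set" where
  "curl_init u t = curl_param u ` {0..t}"

definition nbhd :: "complex set \<Rightarrow> real \<Rightarrow> complex set" where
  "nbhd A \<epsilon> = {y. \<exists>x\<in>A. cmod (x - y) < \<epsilon>}"

definition superficial :: "(nat \<Rightarrow> real) \<Rightarrow> bool" where
  "superficial u \<longleftrightarrow>
     (if bounded (curlicue u)
      then filterlim (\<lambda>\<epsilon>. measure lborel (nbhd (curlicue u) \<epsilon>) / \<epsilon>) at_top (at_right 0)
      else filterlim (\<lambda>t. t / diameter (curl_init u t)) at_top at_top)"

text \<open>Regular (convex or star) polygon: the curve closes up (z_N = z_0 for some N >= 1)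
  and the turning angle between consecutive unit edges is constant.\<close>
definition regular_polygon :: "(nat \<Rightarrow> real) \<Rightarrow> bool" where
  "regular_polygon u \<longleftrightarrow>
     (\<exists>N\<ge>1. zpt u N = zpt u 0) \<and> (\<exists>\<theta>. \<forall>n. u (Suc n) - u n - \<theta> \<in> \<int>)"

definition orbit :: "(real \<Rightarrow> real) \<Rightarrow> real \<Rightarrow> nat \<Rightarrow> real" where
  "orbit F x0 n = (F ^^ n) x0"

end

theory Submission
  imports Defs
begin

(* Conjugacy to the rotation by p/q makes phi^q the identity, so Phi^q(x) - x is an integer
   and the directions exp(2 pi i u_n) of the curlicue are q-periodic.  Hence
   z_(mq+j) = m z_q + z_j: if z_q = 0 the curve retraces q unit segments, so it is bounded
   and its eps-neighbourhood has area O(eps); otherwise it drifts linearly and t / Diam Gamma_t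
   stays bounded.  If phi is the rotation, its lift is a translation x + c with c = p/q mod 1,
   and z_q is a sum over a full set of q-th roots of unity.  Conversely, a constant turning
   angle theta forces q (Phi x - x) to be an integer for every x, so by continuity Phi is a
   translation. *)

lemma diff_Ints_if_cis_eq:
  assumes "cis (2 * pi * a) = cis (2 * pi * b)"
  shows "a - b \<in> \<int>"
proof -
  have "cis (2 * pi * (a - b)) = 1"
    using assms by (simp add: right_diff_distrib flip: cis_divide)
  then have "cos (2 * pi * (a - b)) = 1"
    by (metis cis.sel(1) one_complex.sel(1))
  then obtain n :: int where "2 * pi * (a - b) = real_of_int n * 2 * pi"
    using cos_one_2pi_int by auto
  then show ?thesis by simp
qed

lemma continuous_Ints_valued_constant:
  fixes f :: "real \<Rightarrow> real"
  assumes "continuous_on UNIV f" and "\<And>x. f x \<in> \<int>"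
  shows "f x = f y"
proof -
  have "f constant_on UNIV"
  proof (rule continuous_discrete_range_constant[OF connected_UNIV assms(1)])
    show "\<exists>e>0. \<forall>y. y \<in> UNIV \<and> f y \<noteq> f x \<longrightarrow> e \<le> norm (f y - f x)" for x
    proof (intro exI[of _ 1] conjI allI impI)
      fix y assume "y \<in> UNIV \<and> f y \<noteq> f x"
      moreover have "f y - f x \<in> \<int>" using assms(2) by (intro Ints_diff)
      ultimately show "1 \<le> norm (f y - f x)"
        by (metis Ints_nonzero_abs_ge1 real_norm_def right_minus_eq)
    qed simp
  qed
  then show ?thesis by (auto simp: constant_on_def)
qed

lemma not_filterlim_at_top_if_eventually_le:
  fixes f :: "'a \<Rightarrow> real"
  assumes "F \<noteq> bot" and "eventually (\<lambda>x. f x \<le> C) F"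
  shows "\<not> filterlim f at_top F"
proof
  assume "filterlim f at_top F"
  then have "eventually (\<lambda>x. C + 1 \<le> f x) F" by (simp add: filterlim_at_top)
  with assms(2) have "eventually (\<lambda>x. False) F" by eventually_elim simp
  with assms(1) show False by simp
qed

lemma zpt_0 [simp]: "zpt u 0 = 0"
  by (simp add: zpt_def)

lemma zpt_Suc [simp]: "zpt u (Suc n) = zpt u n + cis (2 * pi * u n)"
  by (simp add: zpt_def)

lemma curl_param_of_nat [simp]: "curl_param u (real n) = zpt u n"
  by (simp add: curl_param_def)

definition periodic_mod1 :: "(nat \<Rightarrow> real) \<Rightarrow> nat \<Rightarrow> bool" where
  "periodic_mod1 u q \<longleftrightarrow> (\<forall>k. u (k + q) - u k \<in> \<int>)"

lemma zpt_add_period: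
  assumes "periodic_mod1 u q"
  shows "zpt u (n + q) = zpt u n + zpt u q"
proof (induction n)
  case (Suc n)
  have "cis (2 * pi * u (n + q)) = cis (2 * pi * u n)"
  proof -
    have "cis (2 * pi * u (n + q)) = cis (2 * pi * (u (n + q) - u n)) * cis (2 * pi * u n)"
      by (simp add: cis_mult algebra_simps)
    with assms show ?thesis by (simp add: periodic_mod1_def)
  qed
  with Suc show ?case by simp
qed simp

lemma zpt_periodic_mod1:
  assumes "periodic_mod1 u q"
  shows "zpt u (m * q + j) = of_nat m * zpt u q + zpt u j"
proof (induction m)
  case (Suc m)
  have "zpt u (Suc m * q + j) = zpt u ((m * q + j) + q)" by (simp add: algebra_simps)
  also have "\<dots> = zpt u (m * q + j) + zpt u q" by (rule zpt_add_period[OF assms])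
  finally show ?case using Suc by (simp add: algebra_simps)
qed simp

lemma zpt_multiple_period:
  assumes "periodic_mod1 u q"
  shows "zpt u (m * q) = of_nat m * zpt u q"
  using zpt_periodic_mod1[OF assms, of m 0] by simp

lemma curl_param_multiple_period:
  assumes "periodic_mod1 u q"
  shows "curl_param u (real (m * q)) = of_nat m * zpt u q"
  by (simp only: curl_param_of_nat zpt_multiple_period[OF assms])

lemma curl_param_in_segment:
  assumes "0 \<le> s"
  shows "curl_param u s \<in> closed_segment (zpt u (nat \<lfloor>s\<rfloor>)) (zpt u (Suc (nat \<lfloor>s\<rfloor>)))"
proof -
  have "curl_param u s = (1 - (s - \<lfloor>s\<rfloor>)) *\<^sub>R zpt u (nat \<lfloor>s\<rfloor>)
                         + (s - \<lfloor>s\<rfloor>) *\<^sub>R zpt u (Suc (nat \<lfloor>s\<rfloor>))"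
    by (simp add: curl_param_def zpt_def scaleR_conv_of_real algebra_simps)
  moreover have "0 \<le> s - \<lfloor>s\<rfloor>" "s - \<lfloor>s\<rfloor> \<le> 1" by linarith+
  ultimately show ?thesis unfolding in_segment by blast
qed

lemma curl_init_subset_segments:
  "curl_init u t \<subseteq> (\<Union>n\<le>nat \<lfloor>t\<rfloor>. closed_segment (zpt u n) (zpt u (Suc n)))"
proof
  fix z assume "z \<in> curl_init u t"
  then obtain s where s: "0 \<le> s" "s \<le> t" "z = curl_param u s"
    by (auto simp: curl_init_def)
  then have "nat \<lfloor>s\<rfloor> \<le> nat \<lfloor>t\<rfloor>" by (simp add: floor_mono nat_mono)
  with s curl_param_in_segment
  show "z \<in> (\<Union>n\<le>nat \<lfloor>t\<rfloor>. closed_segment (zpt u n) (zpt u (Suc n)))" by blast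
qed

lemma bounded_curl_init: "bounded (curl_init u t)"
  by (intro bounded_subset[OF _ curl_init_subset_segments] bounded_UN) (auto simp: bounded_closed_segment)

lemma curlicue_subset_period_segments:
  assumes "periodic_mod1 u q" and "0 < q" and "zpt u q = 0"
  shows "curlicue u \<subseteq> (\<Union>j<q. closed_segment (zpt u j) (zpt u (Suc j)))"
proof
  fix z assume "z \<in> curlicue u"
  then obtain s where "0 \<le> s" and z: "z = curl_param u s" by (auto simp: curlicue_def)
  define n where "n = nat \<lfloor>s\<rfloor>"
  have "zpt u n = zpt u (n mod q)" "zpt u (Suc n) = zpt u (Suc (n mod q))"
    using zpt_periodic_mod1[OF assms(1), of "n div q" "n mod q"]
          zpt_periodic_mod1[OF assms(1), of "n div q" "Suc (n mod q)"] assms(3)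
    by (simp_all add: mult.commute)
  with curl_param_in_segment[OF \<open>0 \<le> s\<close>, of u]
  have "z \<in> closed_segment (zpt u (n mod q)) (zpt u (Suc (n mod q)))" by (simp add: z n_def)
  moreover have "n mod q < q" using assms(2) by simp
  ultimately show "z \<in> (\<Union>j<q. closed_segment (zpt u j) (zpt u (Suc j)))" by blast
qed

lemma nbhd_UN: "nbhd (\<Union>i\<in>I. A i) e = (\<Union>i\<in>I. nbhd (A i) e)"
  by (auto simp: nbhd_def)

lemma nbhd_mono: "A \<subseteq> B \<Longrightarrow> nbhd A e \<subseteq> nbhd B e"
  by (auto simp: nbhd_def)

lemma nbhd_eq_UN_ball: "nbhd A e = (\<Union>x\<in>A. ball x e)"
  by (auto simp: nbhd_def dist_norm)

lemma open_nbhd: "open (nbhd A e)"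
  by (simp add: nbhd_eq_UN_ball open_UN)

lemma bounded_nbhd:
  assumes "bounded A"
  shows "bounded (nbhd A e)"
proof -
  obtain B where B: "\<And>x. x \<in> A \<Longrightarrow> norm x \<le> B" using assms by (meson bounded_iff)
  have "norm y \<le> B + e" if "y \<in> nbhd A e" for y
  proof -
    from that obtain x where "x \<in> A" "norm (x - y) < e" by (auto simp: nbhd_def)
    with B[of x] norm_triangle_ineq4[of x "x - y"] show ?thesis by simp
  qed
  then show ?thesis by (meson bounded_iff)
qed

lemma nbhd_fmeasurable:
  assumes "bounded A"
  shows "nbhd A e \<in> fmeasurable lborel"
proof (rule fmeasurableI)
  show "nbhd A e \<in> sets lborel" by (simp add: borel_open open_nbhd)
  show "emeasure lborel (nbhd A e) < \<infinity>"
    by (rule emeasure_bounded_finite[OF bounded_nbhd[OF assms]])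
qed

lemma nbhd_subset_nbhd:
  assumes "\<And>x. x \<in> A \<Longrightarrow> \<exists>p\<in>P. dist x p \<le> d"
  shows "nbhd A e \<subseteq> nbhd P (d + e)"
proof
  fix y assume "y \<in> nbhd A e"
  then obtain x where "x \<in> A" "dist x y < e" by (auto simp: nbhd_def dist_norm)
  with assms obtain p where "p \<in> P" "dist x p \<le> d" by blast
  with \<open>dist x y < e\<close> have "dist p y < d + e"
    by (metis add_le_less_mono dist_commute dist_triangle order_le_less_trans)
  with \<open>p \<in> P\<close> show "y \<in> nbhd P (d + e)" by (auto simp: nbhd_def dist_norm)
qed

lemma measure_nbhd_finite_le:
  fixes P :: "complex set"
  assumes "finite P" and "0 \<le> r"
  shows "measure lborel (nbhd P r) \<le> card P * (pi * r\<^sup>2)"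
proof -
  have "measure lborel (nbhd P r) \<le> (\<Sum>p\<in>P. measure lborel (ball p r))"
    unfolding nbhd_eq_UN_ball by (rule measure_UNION_le[OF assms(1)]) simp
  also have "\<dots> = card P * (pi * r\<^sup>2)"
    using content_ball[where 'a=complex] assms(2) by (simp add: unit_ball_vol_2)
  finally show ?thesis .
qed

lemma closed_segment_grid_approx:
  assumes "0 < N" and "x \<in> closed_segment a b"
  shows "\<exists>i\<le>N. dist x (a + (real i / real N) *\<^sub>R (b - a)) \<le> norm (b - a) / N"
proof -
  from assms(2) obtain t where t: "0 \<le> t" "t \<le> 1" "x = a + t *\<^sub>R (b - a)"
    by (auto simp: in_segment algebra_simps)
  define i where "i = nat \<lfloor>t * N\<rfloor>"
  have "t * N \<le> N" using t assms(1) by simp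
  then have "i \<le> N" unfolding i_def by linarith
  have "real i = \<lfloor>t * N\<rfloor>" unfolding i_def using t by simp
  then have "\<bar>t * N - i\<bar> \<le> 1" by linarith
  then have "\<bar>t - i / N\<bar> \<le> 1 / N" using assms(1) by (simp add: field_simps)
  then have "\<bar>t - i / N\<bar> * norm (b - a) \<le> norm (b - a) / N"
    by (metis mult_right_mono norm_ge_zero times_divide_eq_left mult_1)
  moreover have "dist x (a + (real i / real N) *\<^sub>R (b - a)) = \<bar>t - i / N\<bar> * norm (b - a)"
    by (simp add: t dist_norm flip: scaleR_diff_left)
  ultimately show ?thesis using \<open>i \<le> N\<close> by auto
qed

lemma measure_nbhd_segment_le:
  fixes a b :: complex
  assumes "norm (b - a) \<le> 1" and "0 < e" and "e \<le> 1"
  shows "measure lborel (nbhd (closed_segment a b) e) \<le> 12 * pi * e"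
proof -
  define N where "N = nat \<lceil>1 / e\<rceil>"
  define P where "P = (\<lambda>i. a + (real i / real N) *\<^sub>R (b - a)) ` {..N}"
  have N: "1 / e \<le> N" "N \<le> 1 / e + 1" using assms(2) by (simp_all add: N_def)
  then have "0 < N" using assms(2) by (metis of_nat_0_less_iff order_less_le_trans zero_less_divide_1_iff)
  have "norm (b - a) / N \<le> 1 / N" using assms(1) by (simp add: divide_right_mono)
  also have "\<dots> \<le> e" using N(1) \<open>0 < N\<close> assms(2) by (simp add: field_simps)
  finally have "norm (b - a) / N \<le> e" .
  have "\<exists>p\<in>P. dist x p \<le> e" if x: "x \<in> closed_segment a b" for x
  proof -
    obtain i where "i \<le> N" and "dist x (a + (real i / real N) *\<^sub>R (b - a)) \<le> norm (b - a) / N"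
      using closed_segment_grid_approx[OF \<open>0 < N\<close> x] by blast
    with \<open>norm (b - a) / N \<le> e\<close> show ?thesis unfolding P_def by force
  qed
  then have "nbhd (closed_segment a b) e \<subseteq> nbhd P (2 * e)"
    using nbhd_subset_nbhd[of "closed_segment a b" P e e] by simp
  then have "measure lborel (nbhd (closed_segment a b) e) \<le> measure lborel (nbhd P (2 * e))"
    by (intro measure_mono_fmeasurable nbhd_fmeasurable) (auto simp: P_def borel_open open_nbhd)
  also have "\<dots> \<le> card P * (pi * (2 * e)\<^sup>2)"
    using assms(2) by (intro measure_nbhd_finite_le) (auto simp: P_def)
  also have "\<dots> \<le> (1 / e + 2) * (pi * (2 * e)\<^sup>2)"
  proof -
    have "card P \<le> N + 1" unfolding P_def using card_image_le[of "{..N}"] by simp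
    with N have "real (card P) \<le> 1 / e + 2" by linarith
    then show ?thesis by (rule mult_right_mono) simp
  qed
  also have "\<dots> \<le> 12 * pi * e"
    using assms(2,3) by (simp add: field_simps power2_eq_square)
  finally show ?thesis .
qed

lemma bounded_curlicue_if_closed:
  assumes "periodic_mod1 u q" and "0 < q" and "zpt u q = 0"
  shows "bounded (curlicue u)"
  by (intro bounded_subset[OF _ curlicue_subset_period_segments[OF assms]] bounded_UN)
     (auto simp: bounded_closed_segment)

lemma measure_nbhd_curlicue_le:
  assumes "periodic_mod1 u q" and "0 < q" and "zpt u q = 0" and "0 < e" and "e \<le> 1"
  shows "measure lborel (nbhd (curlicue u) e) \<le> q * (12 * pi * e)"
proof -
  define S where "S j = closed_segment (zpt u j) (zpt u (Suc j))" for j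
  have "bounded (\<Union>j<q. S j)" by (auto simp: S_def bounded_closed_segment)
  then have "measure lborel (nbhd (curlicue u) e) \<le> measure lborel (nbhd (\<Union>j<q. S j) e)"
    using curlicue_subset_period_segments[OF assms(1-3)]
    by (intro measure_mono_fmeasurable nbhd_fmeasurable nbhd_mono)
       (auto simp: S_def borel_open open_nbhd)
  also have "\<dots> \<le> (\<Sum>j<q. measure lborel (nbhd (S j) e))"
    unfolding nbhd_UN by (rule measure_UNION_le) (auto simp: borel_open open_nbhd)
  also have "\<dots> \<le> (\<Sum>j<q. 12 * pi * e)"
    unfolding S_def using assms(4,5) by (intro sum_mono measure_nbhd_segment_le) simp_all
  finally show ?thesis by simp
qed

lemma not_superficial_if_closed:
  assumes "periodic_mod1 u q" and "0 < q" and "zpt u q = 0"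
  shows "\<not> superficial u"
proof -
  have "eventually (\<lambda>e. measure lborel (nbhd (curlicue u) e) / e \<le> q * (12 * pi)) (at_right 0)"
  proof -
    have "eventually (\<lambda>e::real. 0 < e \<and> e \<le> 1) (at_right 0)"
      by (auto simp: eventually_at_right_field intro: exI[of _ 1])
    then show ?thesis
      by eventually_elim (use measure_nbhd_curlicue_le[OF assms] in \<open>auto simp: field_simps\<close>)
  qed
  then have "\<not> filterlim (\<lambda>e. measure lborel (nbhd (curlicue u) e) / e) at_top (at_right 0)"
    by (intro not_filterlim_at_top_if_eventually_le) simp_all
  then show ?thesis using bounded_curlicue_if_closed[OF assms] by (simp add: superficial_def)
qed

lemma unbounded_curlicue_if_not_closed:
  assumes "periodic_mod1 u q" and "zpt u q \<noteq> 0"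
  shows "\<not> bounded (curlicue u)"
proof
  assume "bounded (curlicue u)"
  then obtain B where B: "\<And>z. z \<in> curlicue u \<Longrightarrow> norm z \<le> B" by (meson bounded_iff)
  obtain m :: nat where m: "B / norm (zpt u q) < m" using reals_Archimedean2 by blast
  have "of_nat m * zpt u q \<in> curlicue u"
    unfolding curlicue_def
    by (metis curl_param_multiple_period[OF assms(1)] atLeast_iff imageI of_nat_0_le_iff)
  then have "m * norm (zpt u q) \<le> B" using B by (metis norm_mult norm_of_nat)
  with m assms(2) show False by (simp add: field_simps)
qed

lemma diameter_curl_init_ge:
  assumes "periodic_mod1 u q" and "real (m * q) \<le> t"
  shows "m * norm (zpt u q) \<le> diameter (curl_init u t)"
proof -
  have "0 \<le> t" using assms(2) of_nat_0_le_iff[of "m * q"] by linarith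
  then have "0 \<in> curl_init u t"
    unfolding curl_init_def using curl_param_of_nat[of u 0] by (force simp: zpt_def)
  moreover have "of_nat m * zpt u q \<in> curl_init u t"
    unfolding curl_init_def using assms
    by (metis curl_param_multiple_period atLeastAtMost_iff imageI of_nat_0_le_iff)
  ultimately have "dist 0 (of_nat m * zpt u q) \<le> diameter (curl_init u t)"
    by (intro diameter_bounded_bound bounded_curl_init)
  then show ?thesis by (simp add: norm_mult)
qed

lemma length_over_diameter_le:
  assumes "periodic_mod1 u q" and "0 < q" and "zpt u q \<noteq> 0" and "2 * real q \<le> t"
  shows "t / diameter (curl_init u t) \<le> 2 * real q / norm (zpt u q)"
proof -
  define m where "m = nat \<lfloor>t / q\<rfloor>"
  have "2 \<le> t / q" using assms(2,4) by (simp add: field_simps)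
  then have m: "real m = \<lfloor>t / q\<rfloor>" unfolding m_def by simp
  then have "real m \<le> t / q" by linarith
  then have "real (m * q) \<le> t" using assms(2) by (simp add: le_divide_eq)
  have "t / (2 * q) \<le> m" using m \<open>2 \<le> t / q\<close> by (simp add: field_simps) linarith
  define d where "d = t / (2 * q) * norm (zpt u q)"
  have "0 < d" unfolding d_def using assms(2-4) by simp
  have "d \<le> diameter (curl_init u t)"
    using diameter_curl_init_ge[OF assms(1) \<open>real (m * q) \<le> t\<close>] \<open>t / (2 * q) \<le> m\<close>
    unfolding d_def by (meson mult_right_mono norm_ge_zero order_trans)
  then have "t / diameter (curl_init u t) \<le> t / d"
    using \<open>0 < d\<close> assms(2,4) by (intro divide_left_mono) auto
  also have "\<dots> = 2 * real q / norm (zpt u q)"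
    using \<open>0 < d\<close> assms(2-4) unfolding d_def by (simp add: field_simps)
  finally show ?thesis .
qed

lemma not_superficial_if_not_closed:
  assumes "periodic_mod1 u q" and "0 < q" and "zpt u q \<noteq> 0"
  shows "\<not> superficial u"
proof -
  have "eventually (\<lambda>t. t / diameter (curl_init u t) \<le> 2 * real q / norm (zpt u q)) at_top"
    using eventually_ge_at_top[of "2 * real q"]
    by eventually_elim (rule length_over_diameter_le[OF assms])
  then have "\<not> filterlim (\<lambda>t. t / diameter (curl_init u t)) at_top at_top"
    by (intro not_filterlim_at_top_if_eventually_le) simp_all
  then show ?thesis using unbounded_curlicue_if_not_closed[OF assms(1,3)] by (simp add: superficial_def)
qed

lemma bounded_curlicue_iff:
  assumes "periodic_mod1 u q" and "0 < q"
  shows "bounded (curlicue u) \<longleftrightarrow> zpt u q = 0"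
  using bounded_curlicue_if_closed unbounded_curlicue_if_not_closed assms by blast

lemma not_superficial_periodic_mod1:
  assumes "periodic_mod1 u q" and "0 < q"
  shows "\<not> superficial u"
  using not_superficial_if_closed not_superficial_if_not_closed assms by blast

lemma is_lift_continuous: "is_lift F f \<Longrightarrow> continuous_on UNIV F"
  by (auto simp: is_lift_def homeomorphism_def)

lemma is_lift_cis: "is_lift F f \<Longrightarrow> f (cis (2 * pi * x)) = cis (2 * pi * F x)"
  by (simp add: is_lift_def)

lemma is_lift_funpow:
  assumes "is_lift F f"
  shows "(f ^^ k) (cis (2 * pi * x)) = cis (2 * pi * (F ^^ k) x)"
  by (induction k) (simp_all add: is_lift_cis[OF assms])

lemma S1_cisE:
  assumes "z \<in> S1"
  obtains x where "z = cis (2 * pi * x)"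
proof
  have "z \<noteq> 0" using assms by auto
  with assms cis_Arg[of z] show "z = cis (2 * pi * (Arg z / (2 * pi)))" by (simp add: sgn_div_norm)
qed

lemma funpow_conjugate:
  assumes "homeomorphism S T h h'" and "g ` T \<subseteq> T" and "\<forall>z\<in>S. f z = h' (g (h z))"
    and "z \<in> S"
  shows "(f ^^ k) z = h' ((g ^^ k) (h z))"
proof (induction k)
  case 0
  show ?case using assms(1,4) by (simp add: homeomorphism_apply1)
next
  case (Suc k)
  have "(g ^^ k) (h z) \<in> T"
    by (induction k) (use assms(1,2,4) in \<open>auto simp: homeomorphism_def\<close>)
  then have "h' ((g ^^ k) (h z)) \<in> S" and "h (h' ((g ^^ k) (h z))) = (g ^^ k) (h z)"
    using assms(1) by (auto simp: homeomorphism_def)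
  with Suc assms(3) show ?case by simp
qed

lemma rot_funpow: "(rot \<rho> ^^ k) z = rot (real k * \<rho>) z"
  by (induction k) (simp_all add: rot_def cis_mult distrib_left distrib_right add.commute)

lemma rot_S1: "rot \<rho> ` S1 \<subseteq> S1"
  by (auto simp: rot_def norm_mult)

lemma rot_Ints: "\<rho> \<in> \<int> \<Longrightarrow> rot \<rho> z = z"
  by (simp add: rot_def)

lemma conjugate_rotation_funpow_id:
  assumes "homeomorphism S1 S1 h h'" and "\<forall>z\<in>S1. f z = h' (rot \<rho> (h z))"
    and "real q * \<rho> \<in> \<int>" and "z \<in> S1"
  shows "(f ^^ q) z = z"
  using funpow_conjugate[OF assms(1) rot_S1 assms(2,4), of q] assms(1,3,4)
  by (simp add: rot_funpow rot_Ints homeomorphism_apply1)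

lemma orbit_periodic_mod1_if_funpow_id:
  assumes "is_lift F f" and "\<forall>z\<in>S1. (f ^^ q) z = z"
  shows "periodic_mod1 (orbit F x0) q"
  unfolding periodic_mod1_def
proof
  fix k
  define y where "y = (F ^^ k) x0"
  have "cis (2 * pi * (F ^^ q) y) = cis (2 * pi * y)"
    using assms by (simp flip: is_lift_funpow)
  moreover have "orbit F x0 (k + q) = (F ^^ q) y" "orbit F x0 k = y"
    by (simp_all add: orbit_def y_def funpow_add add.commute[of k q])
  ultimately show "orbit F x0 (k + q) - orbit F x0 k \<in> \<int>"
    by (simp add: diff_Ints_if_cis_eq)
qed

lemma funpow_translation: "(\<forall>x. F x = x + c) \<Longrightarrow> (F ^^ n) x = x + real n * c"
  by (induction n) (auto simp: algebra_simps)

lemma orbit_translation: "\<forall>x. F x = x + c \<Longrightarrow> orbit F x0 k = x0 + real k * c"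
  by (simp add: orbit_def funpow_translation)

lemma lift_rot_translation:
  assumes "\<forall>x. F x = x + c"
  shows "lift_rot F = c"
proof -
  have "eventually (\<lambda>n. c = (F ^^ n) 0 / real n) sequentially"
    using eventually_gt_at_top[of "0::nat"] by eventually_elim (simp add: funpow_translation[OF assms])
  then have "(\<lambda>n. (F ^^ n) 0 / real n) \<longlonglongrightarrow> c"
    by (rule Lim_transform_eventually[OF tendsto_const])
  then show ?thesis unfolding lift_rot_def by (rule limI)
qed

lemma translation_if_lift_of_rotation:
  assumes "is_lift F f" and "\<forall>z\<in>S1. f z = rot \<rho> z"
  shows "\<exists>c. (\<forall>x. F x = x + c) \<and> c - \<rho> \<in> \<int>"
proof -
  have "cis (2 * pi * F x) = cis (2 * pi * (x + \<rho>))" for x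
  proof -
    have "cis (2 * pi * F x) = f (cis (2 * pi * x))" by (rule is_lift_cis[OF assms(1), symmetric])
    also have "\<dots> = rot \<rho> (cis (2 * pi * x))" using assms(2) by simp
    also have "\<dots> = cis (2 * pi * (x + \<rho>))" by (simp add: rot_def cis_mult algebra_simps)
    finally show ?thesis .
  qed
  then have Ints: "F x - (x + \<rho>) \<in> \<int>" for x
    by (rule diff_Ints_if_cis_eq)
  have cont: "continuous_on UNIV (\<lambda>x. F x - (x + \<rho>))"
    by (intro continuous_intros is_lift_continuous[OF assms(1)])
  have "F x = x + F 0" for x
    using continuous_Ints_valued_constant[OF cont Ints, of x 0] by linarith
  moreover have "F 0 - \<rho> \<in> \<int>" using Ints[of 0] by simp
  ultimately show ?thesis by blast
qed

lemma rotation_if_lift_translation: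
  assumes "is_lift F f" and "\<forall>x. F x = x + c" and "c - \<rho> \<in> \<int>"
  shows "\<forall>z\<in>S1. f z = rot \<rho> z"
proof
  fix z :: complex assume "z \<in> S1"
  then obtain x where z: "z = cis (2 * pi * x)" by (rule S1_cisE)
  have "f z = cis (2 * pi * (x + c))" using assms(2) by (simp only: z is_lift_cis[OF assms(1)])
  also have "\<dots> = cis (2 * pi * (c - \<rho>)) * cis (2 * pi * (x + \<rho>))"
    by (simp add: cis_mult algebra_simps)
  also have "\<dots> = rot \<rho> z"
    unfolding cis_multiple_2pi[OF assms(3)] by (simp add: z rot_def cis_mult algebra_simps)
  finally show "f z = rot \<rho> z" .
qed

lemma sum_cis_arith_progression:
  assumes "real q * c \<in> \<int>" and "c \<notin> \<int>"
  shows "(\<Sum>k<q. cis (2 * pi * (x0 + real k * c))) = 0"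
proof -
  define \<omega> where "\<omega> = cis (2 * pi * c)"
  have "\<omega> \<noteq> 1" using assms(2) diff_Ints_if_cis_eq[of c 0] by (auto simp: \<omega>_def)
  have "\<omega> ^ q = cis (2 * pi * (real q * c))" unfolding \<omega>_def Complex.DeMoivre by (simp add: mult_ac)
  with assms(1) have "\<omega> ^ q = 1" by simp
  have "(\<Sum>k<q. cis (2 * pi * (x0 + real k * c))) = cis (2 * pi * x0) * (\<Sum>k<q. \<omega> ^ k)"
    by (simp add: \<omega>_def Complex.DeMoivre sum_distrib_left cis_mult algebra_simps)
  also have "\<dots> = 0" using \<open>\<omega> \<noteq> 1\<close> \<open>\<omega> ^ q = 1\<close> by (simp add: sum_gp_strict)
  finally show ?thesis .
qed

lemma coprime_fraction_not_Ints:
  assumes "coprime p (int q)" and "2 \<le> q"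
  shows "real_of_int p / real q \<notin> \<int>"
proof
  assume "real_of_int p / real q \<in> \<int>"
  then obtain k where "real_of_int p / real q = of_int k" by (auto elim: Ints_cases)
  then have "real_of_int p = real_of_int (k * int q)" using assms(2) by (simp add: field_simps)
  then have "p = k * int q" by (rule of_int_eq_iff[THEN iffD1])
  then have "int q dvd p" by simp
  with assms(1) have "is_unit (int q)" by (metis coprime_absorb_left coprime_commute)
  with assms(2) show False by simp
qed

lemma of_nat_mult_Ints_if_diff_fraction:
  assumes "c - real_of_int p / real q \<in> \<int>" and "0 < q"
  shows "real q * c \<in> \<int>"
proof -
  have "real q * c = of_int p + real q * (c - real_of_int p / real q)"
    using assms(2) by (simp add: field_simps)
  also have "\<dots> \<in> \<int>" using assms(1) by (intro Ints_add Ints_mult) auto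
  finally show ?thesis .
qed

lemma zpt_translation_orbit_eq_0:
  assumes "\<forall>x. F x = x + c" and "c - real_of_int p / real q \<in> \<int>"
    and "coprime p (int q)" and "2 \<le> q"
  shows "zpt (orbit F x0) q = 0"
proof -
  have "c \<notin> \<int>"
  proof
    assume "c \<in> \<int>"
    then have "c - (c - real_of_int p / real q) \<in> \<int>" using assms(2) by (rule Ints_diff)
    with coprime_fraction_not_Ints[OF assms(3,4)] show False by simp
  qed
  with of_nat_mult_Ints_if_diff_fraction[OF assms(2)] assms(4) show ?thesis
    by (simp add: zpt_def orbit_translation[OF assms(1)] sum_cis_arith_progression)
qed

lemma regular_polygon_orbit_displacement_Ints:
  assumes "periodic_mod1 (orbit F x) q" and "regular_polygon (orbit F x)"
  shows "real q * (F x - x) \<in> \<int>"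
proof -
  \<comment> \<open>Summing the turning angle over one period shows that q \<theta> is an integer.\<close>
  obtain \<theta> where \<theta>: "\<forall>n. orbit F x (Suc n) - orbit F x n - \<theta> \<in> \<int>"
    using assms(2) by (auto simp: regular_polygon_def)
  have "(\<Sum>n<q. orbit F x (Suc n) - orbit F x n - \<theta>) \<in> \<int>"
    using \<theta> by (intro Ints_sum) auto
  also have "(\<Sum>n<q. orbit F x (Suc n) - orbit F x n - \<theta>)
               = (orbit F x q - orbit F x 0) - real q * \<theta>"
    using sum_lessThan_telescope[of "orbit F x" q] by (simp add: sum_subtractf)
  finally have sum: "(orbit F x q - orbit F x 0) - real q * \<theta> \<in> \<int>" .
  have period: "orbit F x (0 + q) - orbit F x 0 \<in> \<int>"
    using assms(1) unfolding periodic_mod1_def by blast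
  have "real q * \<theta>
          = (orbit F x (0 + q) - orbit F x 0) - ((orbit F x q - orbit F x 0) - real q * \<theta>)"
    by simp
  also have "\<dots> \<in> \<int>" using period sum by (rule Ints_diff)
  finally have "real q * \<theta> \<in> \<int>" .
  moreover have "F x - x - \<theta> \<in> \<int>" using \<theta>[rule_format, of 0] by (simp add: orbit_def)
  ultimately have "real q * (F x - x - \<theta>) + real q * \<theta> \<in> \<int>"
    by (simp add: Ints_add Ints_mult)
  then show ?thesis by (simp add: algebra_simps)
qed

lemma translation_if_regular_polygon_orbits:
  assumes "continuous_on UNIV F" and "\<And>x0. periodic_mod1 (orbit F x0) q"
    and "\<forall>x0. regular_polygon (orbit F x0)" and "0 < q"
  shows "\<exists>c. \<forall>x. F x = x + c"
proof -
  have Ints: "real q * (F x - x) \<in> \<int>" for x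
    using assms(2,3) by (simp add: regular_polygon_orbit_displacement_Ints)
  have "continuous_on UNIV (\<lambda>x. real q * (F x - x))"
    by (intro continuous_intros assms(1))
  from continuous_Ints_valued_constant[OF this Ints]
  have "real q * (F x - x) = real q * (F 0 - 0)" for x .
  with assms(4) have diff: "F x - x = F 0" for x by simp
  have "F x = x + F 0" for x using diff[of x] by linarith
  then show ?thesis by blast
qed

lemma rotation_if_regular_polygon_orbits:
  assumes "is_lift F f" and "\<And>x0. periodic_mod1 (orbit F x0) q" and "0 < q"
    and "rotation_number F = \<rho>" and "\<forall>x0. regular_polygon (orbit F x0)"
  shows "\<forall>z\<in>S1. f z = rot \<rho> z"
proof -
  obtain c where c: "\<forall>x. F x = x + c"
    using translation_if_regular_polygon_orbits[OF is_lift_continuous[OF assms(1)] assms(2,5,3)] by blast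
  then have "c - \<rho> = of_int \<lfloor>c\<rfloor>"
    using assms(4) by (simp add: rotation_number_def lift_rot_translation frac_def)
  then have "c - \<rho> \<in> \<int>" by simp
  with assms(1) c show ?thesis by (rule rotation_if_lift_translation)
qed

lemma regular_polygon_orbit_if_rotation:
  assumes "is_lift F f" and "\<forall>z\<in>S1. f z = rot (real_of_int p / real q) z"
    and "coprime p (int q)" and "2 \<le> q"
  shows "regular_polygon (orbit F x0)"
proof -
  obtain c where c: "\<forall>x. F x = x + c" "c - real_of_int p / real q \<in> \<int>"
    using translation_if_lift_of_rotation[OF assms(1,2)] by blast
  have "zpt (orbit F x0) q = zpt (orbit F x0) 0"
    using zpt_translation_orbit_eq_0[OF c assms(3,4)] by simp
  moreover have "\<forall>n. orbit F x0 (Suc n) - orbit F x0 n - c \<in> \<int>"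
    by (simp add: orbit_translation[OF c(1)] algebra_simps)
  ultimately show ?thesis
    unfolding regular_polygon_def using assms(4) by (metis Suc_1 Suc_leD)
qed

lemma real_curlicue_vertices_if_rotation:
  assumes "is_lift F f" and "\<forall>z\<in>S1. f z = rot (real_of_int p / real q) z"
    and "coprime p (int q)" and "0 < q" and "x0 \<in> \<int>"
  shows "Im (zpt (orbit F x0) (n * q)) = 0 \<and> Im (zpt (orbit F x0) (n * q + 1)) = 0"
proof -
  obtain c where c: "\<forall>x. F x = x + c" "c - real_of_int p / real q \<in> \<int>"
    using translation_if_lift_of_rotation[OF assms(1,2)] by blast
  have qc: "real q * c \<in> \<int>" by (rule of_nat_mult_Ints_if_diff_fraction[OF c(2) assms(4)])
  have u: "orbit F x0 k = x0 + real k * c" for k by (rule orbit_translation[OF c(1)])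
  have per: "periodic_mod1 (orbit F x0) q"
    using qc by (simp add: periodic_mod1_def u algebra_simps)
  have "Im (zpt (orbit F x0) q) = 0"
  proof (cases "q = 1")
    case True
    with assms(5) show ?thesis by (simp add: zpt_def u)
  next
    case False
    with assms(4) zpt_translation_orbit_eq_0[OF c assms(3)] show ?thesis by simp
  qed
  then have Im_period: "Im (zpt (orbit F x0) (n * q)) = 0"
    by (simp add: zpt_multiple_period[OF per])
  have "orbit F x0 (n * q) = x0 + real n * (real q * c)" by (simp add: u algebra_simps)
  then have "orbit F x0 (n * q) \<in> \<int>" using assms(5) qc by (simp add: Ints_add Ints_mult)
  with Im_period show ?thesis by simp
qed

theorem proposition2p9:
  fixes \<phi> :: "complex \<Rightarrow> complex" and \<Phi> :: "real \<Rightarrow> real"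
    and p :: int and q :: nat
  assumes homeo: "circle_homeo \<phi>" and orient: "orient_pres \<phi>"
    and lift: "is_lift \<Phi> \<phi>"
    and cop: "coprime p (int q)" and q1: "q \<ge> 1"
    and rotnum: "rotation_number \<Phi> = real_of_int p / real q"
    and conj: "\<exists>h h'. homeomorphism S1 S1 h h' \<and> orient_pres h \<and>
                 (\<forall>z\<in>S1. \<phi> z = h' (rot (real_of_int p / real q) (h z)))"
  shows "(\<forall>x0. \<not> superficial (orbit \<Phi> x0))
    \<and> (\<forall>x0.
         ((1 / of_nat q) * (\<Sum>k<q. cis (2 * pi * (\<Phi> ^^ k) x0)) = 0
            \<longleftrightarrow> bounded (curlicue (orbit \<Phi> x0)))
       \<and> (bounded (curlicue (orbit \<Phi> x0))
            \<longleftrightarrow> zpt (orbit \<Phi> x0) q = zpt (orbit \<Phi> x0) 0))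
    \<and> (q \<ge> 2 \<longrightarrow>
         ((\<forall>x0. regular_polygon (orbit \<Phi> x0))
            \<longleftrightarrow> (\<forall>z\<in>S1. \<phi> z = rot (real_of_int p / real q) z)))
    \<and> ((\<forall>z\<in>S1. \<phi> z = rot (real_of_int p / real q) z) \<longrightarrow>
         (\<forall>x0\<in>\<int>. \<forall>n. Im (zpt (orbit \<Phi> x0) (n * q)) = 0
                     \<and> Im (zpt (orbit \<Phi> x0) (n * q + 1)) = 0))"
proof -
  from conj obtain h h' where hom: "homeomorphism S1 S1 h h'"
    and conj_rot: "\<forall>z\<in>S1. \<phi> z = h' (rot (real_of_int p / real q) (h z))"
    by blast
  have "0 < q" using q1 by simp
  then have "real q * (real_of_int p / real q) \<in> \<int>" by simp
  then have per: "periodic_mod1 (orbit \<Phi> x0) q" for x0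
    using orbit_periodic_mod1_if_funpow_id[OF lift] conjugate_rotation_funpow_id[OF hom conj_rot] by blast
  have sum_eq: "(\<Sum>k<q. cis (2 * pi * (\<Phi> ^^ k) x0)) = zpt (orbit \<Phi> x0) q" for x0
    by (simp add: zpt_def orbit_def)
  show ?thesis
    using not_superficial_periodic_mod1[OF per \<open>0 < q\<close>] bounded_curlicue_iff[OF per \<open>0 < q\<close>]
      regular_polygon_orbit_if_rotation[OF lift _ cop]
      rotation_if_regular_polygon_orbits[OF lift per \<open>0 < q\<close> rotnum]
      real_curlicue_vertices_if_rotation[OF lift _ cop \<open>0 < q\<close>]
    by (auto simp: sum_eq simp del: zpt_Suc)
qed

end
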